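(* Let $\lambda\in Y^{++}$, $\nu\in Y^+$ and $u\in W^v$. Then the set $\{\mu\in W^v\lambda:\nu\in R_u(\mu)\}$ is finite.
   Context: $I$ finite, $A$ a generalized Cartan matrix, $Y$ a free $\mathbb Z$-module of finite rank with free family $(\alpha_i^\vee)_{i\in I}$ and $\alpha_i\in\mathrm{Hom}(Y,\mathbb Z)$ with $\alpha_j(\alpha_i^\vee)=a_{i,j}$; $\mathbb A=Y\otimes\mathbb R$; $r_i(v)=v-\alpha_i(v)\alpha_i^\vee$; $W^v=\langle r_i\rangle$; $Q^\vee=\bigoplus\mathbb Z\alpha_i^\vee$; $C^v_f=\{\alpha_i>0\ \forall i\}$, $\mathcal T=\bigcup_w w\overline{C^v_f}$, $Y^+=Y\cap\mathcal T$, $Y^{++}=Y\cap\overline{C^v_f}$. For $E\subset Y$, $R_i(E)=\mathrm{conv}(E\cup r_i(E))\cap(E+Q^\vee)$; for $w\in W^v$, $\mu\in Y$, $R_w(\mu)=\bigcup R_{i_1}(\cdots R_{i_k}(\{\mu\})\cdots)$ over all reduced expressions $w=r_{i_1}\cdots r_{i_k}$. *)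

theory Defs
  imports "HOL-Analysis.Analysis"
begin

(* Y = int^'d (free Z-module of finite rank), A = Y (x) R = real^'d.
   Coroots alphav i :: int^'d ; roots alpha i :: int^'d, acting by
   alpha_i(y) = sum_k alpha i $ k * y $ k  (every element of Hom(Y,Z) has this form). *)

definition gen_cartan :: "('i \<Rightarrow> 'i \<Rightarrow> int) \<Rightarrow> bool" where
  "gen_cartan A \<longleftrightarrow> (\<forall>i. A i i = 2) \<and> (\<forall>i j. i \<noteq> j \<longrightarrow> A i j \<le> 0)
     \<and> (\<forall>i j. A i j = 0 \<longleftrightarrow> A j i = 0)"

definition pairY :: "int^'d \<Rightarrow> int^'d \<Rightarrow> int" where
  "pairY a y = (\<Sum>k\<in>UNIV. a $ k * y $ k)"

definition pairA :: "int^'d \<Rightarrow> real^'d \<Rightarrow> real" where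
  "pairA a x = (\<Sum>k\<in>UNIV. real_of_int (a $ k) * x $ k)"

definition embY :: "int^'d \<Rightarrow> real^'d" where
  "embY y = (\<chi> k. real_of_int (y $ k))"

definition root_datum :: "('i::finite \<Rightarrow> 'i \<Rightarrow> int) \<Rightarrow> ('i \<Rightarrow> int^'d) \<Rightarrow> ('i \<Rightarrow> int^'d) \<Rightarrow> bool" where
  "root_datum A alphav alpha \<longleftrightarrow> gen_cartan A
     \<and> (\<forall>c::'i \<Rightarrow> int. (\<Sum>i\<in>UNIV. c i *s alphav i) = 0 \<longrightarrow> (\<forall>i. c i = 0))
     \<and> (\<forall>i j. pairY (alpha j) (alphav i) = A i j)"

definition reflA :: "('i \<Rightarrow> int^'d) \<Rightarrow> ('i \<Rightarrow> int^'d) \<Rightarrow> 'i \<Rightarrow> real^'d \<Rightarrow> real^'d" where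
  "reflA alphav alpha i v = v - pairA (alpha i) v *\<^sub>R embY (alphav i)"

definition reflY :: "('i \<Rightarrow> int^'d) \<Rightarrow> ('i \<Rightarrow> int^'d) \<Rightarrow> 'i \<Rightarrow> int^'d \<Rightarrow> int^'d" where
  "reflY alphav alpha i y = y - pairY (alpha i) y *s alphav i"

definition word_act :: "('i \<Rightarrow> int^'d) \<Rightarrow> ('i \<Rightarrow> int^'d) \<Rightarrow> 'i list \<Rightarrow> real^'d \<Rightarrow> real^'d" where
  "word_act alphav alpha ws = foldr (\<lambda>i f. reflA alphav alpha i \<circ> f) ws id"

definition Wv :: "('i \<Rightarrow> int^'d) \<Rightarrow> ('i \<Rightarrow> int^'d) \<Rightarrow> (real^'d \<Rightarrow> real^'d) set" where
  "Wv alphav alpha = {word_act alphav alpha ws | ws. True}"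

definition reduced_expr :: "('i \<Rightarrow> int^'d) \<Rightarrow> ('i \<Rightarrow> int^'d) \<Rightarrow> (real^'d \<Rightarrow> real^'d) \<Rightarrow> 'i list \<Rightarrow> bool" where
  "reduced_expr alphav alpha w ws \<longleftrightarrow> word_act alphav alpha ws = w
     \<and> (\<forall>ws'. word_act alphav alpha ws' = w \<longrightarrow> length ws \<le> length ws')"

definition Qvee :: "('i::finite \<Rightarrow> int^'d) \<Rightarrow> (int^'d) set" where
  "Qvee alphav = {\<Sum>i\<in>UNIV. n i *s alphav i | n. True}"

definition Ri :: "('i::finite \<Rightarrow> int^'d) \<Rightarrow> ('i \<Rightarrow> int^'d) \<Rightarrow> 'i \<Rightarrow> (int^'d) set \<Rightarrow> (int^'d) set" where
  "Ri alphav alpha i E = {y. (\<exists>e\<in>E. \<exists>q\<in>Qvee alphav. y = e + q)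
      \<and> embY y \<in> convex hull (embY ` (E \<union> reflY alphav alpha i ` E))}"

definition Rw :: "('i::finite \<Rightarrow> int^'d) \<Rightarrow> ('i \<Rightarrow> int^'d) \<Rightarrow> (real^'d \<Rightarrow> real^'d) \<Rightarrow> int^'d \<Rightarrow> (int^'d) set" where
  "Rw alphav alpha w mu = (\<Union>ws\<in>{ws. reduced_expr alphav alpha w ws}.
      foldr (Ri alphav alpha) ws {mu})"

definition Cvf :: "('i \<Rightarrow> int^'d) \<Rightarrow> (real^'d) set" where
  "Cvf alpha = {x. \<forall>i. pairA (alpha i) x > 0}"

definition tits_cone :: "('i \<Rightarrow> int^'d) \<Rightarrow> ('i \<Rightarrow> int^'d) \<Rightarrow> (real^'d) set" where
  "tits_cone alphav alpha = (\<Union>w\<in>Wv alphav alpha. w ` closure (Cvf alpha))"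

definition Yplus :: "('i \<Rightarrow> int^'d) \<Rightarrow> ('i \<Rightarrow> int^'d) \<Rightarrow> (int^'d) set" where
  "Yplus alphav alpha = {y. embY y \<in> tits_cone alphav alpha}"

definition Yplusplus :: "('i \<Rightarrow> int^'d) \<Rightarrow> (int^'d) set" where
  "Yplusplus alpha = {y. embY y \<in> closure (Cvf alpha)}"

definition Worbit :: "('i \<Rightarrow> int^'d) \<Rightarrow> ('i \<Rightarrow> int^'d) \<Rightarrow> int^'d \<Rightarrow> (int^'d) set" where
  "Worbit alphav alpha lam = {mu. \<exists>w\<in>Wv alphav alpha. embY mu = w (embY lam)}"

end

theory Submission
  imports Defs
begin

text \<open>The coroots are linearly independent, so there is a linear height function \<open>ht\<close> with
  \<open>ht(\<alpha>\<^sub>i\<^sup>\<or>) = 1\<close>. The classical fact behind the proof is that \<open>w(\<alpha>\<^sub>i\<^sup>\<or>)\<close> is a nonnegative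
  combination of coroots whenever \<open>\<ell>(w r\<^sub>i) \<ge> \<ell>(w)\<close>; by induction on \<open>\<ell>(w)\<close> it reduces to a
  rank-2 subgroup \<open>\<langle>r\<^sub>i, r\<^sub>j\<rangle>\<close>, where it is a computation (an inductive invariant if
  \<open>a\<^sub>i\<^sub>j a\<^sub>j\<^sub>i \<ge> 4\<close>, the braid relation otherwise). Hence \<open>\<lambda> - w\<lambda>\<close> is a nonnegative integer
  combination of coroots for dominant \<open>\<lambda>\<close>. Since \<open>R\<^sub>i\<close> only adds convex combinations with
  \<open>r\<^sub>i\<close>-images, \<open>\<nu> \<in> R\<^sub>u(\<mu>)\<close> lies in the convex hull of the points \<open>v\<mu>\<close> with \<open>\<ell>(v) \<le> \<ell>(u)\<close>, so
  one of them has height at least \<open>ht(\<nu>)\<close>. Writing \<open>\<lambda> - v\<mu> = \<Sum> n\<^sub>k \<alpha>\<^sub>k\<^sup>\<or>\<close> with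
  \<open>0 \<le> n\<^sub>k \<le> ht(\<lambda>) - ht(\<nu>)\<close> leaves finitely many pairs \<open>(v, n)\<close>, and each determines \<open>\<mu>\<close>.\<close>

lemma linear_pairA: "linear (pairA a)"
  unfolding pairA_def by (rule linearI) (simp_all add: sum.distrib sum_distrib_left algebra_simps)

lemmas pairA_add = linear_add[OF linear_pairA]
  and pairA_diff = linear_diff[OF linear_pairA]
  and pairA_scaleR = linear_scale[OF linear_pairA]

lemma pairA_zero [simp]: "pairA a 0 = 0"
  using linear_0[OF linear_pairA] .

lemma pairA_embY: "pairA a (embY y) = of_int (pairY a y)"
  unfolding pairA_def pairY_def embY_def by simp

lemma continuous_on_pairA: "continuous_on S (pairA a)"
  unfolding pairA_def by (intro continuous_intros)

lemma pairA_nonneg_on_closure_Cvf: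
  assumes "x \<in> closure (Cvf alpha)"
  shows "0 \<le> pairA (alpha k) x"
proof -
  have "closure (Cvf alpha) \<subseteq> {x. 0 \<le> pairA (alpha k) x}"
  proof (rule closure_minimal)
    show "Cvf alpha \<subseteq> {x. 0 \<le> pairA (alpha k) x}"
      unfolding Cvf_def by (auto intro: less_imp_le)
    show "closed {x. 0 \<le> pairA (alpha k) x}"
      by (rule closed_Collect_le[OF continuous_on_const continuous_on_pairA])
  qed
  then show ?thesis using assms by auto
qed

lemma embY_add: "embY (x + y) = embY x + embY y"
  and embY_diff: "embY (x - y) = embY x - embY y"
  and embY_scale: "embY (c *s x) = of_int c *\<^sub>R embY x"
  and embY_zero [simp]: "embY 0 = 0"
  unfolding embY_def by (simp_all add: vec_eq_iff)

lemma embY_sum: "embY (\<Sum>k\<in>S. f k) = (\<Sum>k\<in>S. embY (f k))"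
  by (induction S rule: infinite_finite_induct) (auto simp: embY_add)

lemma inj_embY: "inj embY"
  by (rule injI) (simp add: embY_def vec_eq_iff)

lemma word_act_Nil [simp]: "word_act av al [] = id"
  and word_act_Cons [simp]: "word_act av al (i # ws) = reflA av al i \<circ> word_act av al ws"
  unfolding word_act_def by simp_all

lemma word_act_append: "word_act av al (ws @ vs) = word_act av al ws \<circ> word_act av al vs"
  by (induction ws) auto

lemma word_act_in_Wv [simp]: "word_act av al ws \<in> Wv av al"
  unfolding Wv_def by auto

lemma linear_reflA: "linear (reflA av al i)"
  by (rule linearI) (simp_all add: reflA_def pairA_add pairA_scaleR algebra_simps)

lemma linear_word_act: "linear (word_act av al ws)"
proof (induction ws)
  case (Cons i ws)
  then show ?case using linear_compose[OF Cons.IH linear_reflA] by (simp add: o_def)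
qed (simp add: id_def linear_ident)

lemma linear_Wv: "w \<in> Wv av al \<Longrightarrow> linear w"
  unfolding Wv_def using linear_word_act by auto

lemma convex_hull_linear_le_point:
  fixes h :: "'a::real_vector \<Rightarrow> real"
  assumes "linear h" and "x \<in> convex hull S"
  obtains y where "y \<in> S" and "h x \<le> h y"
proof (rule ccontr)
  assume "\<not> thesis"
  with that have "S \<subseteq> h -` {..<h x}" by force
  moreover have "convex (h -` {..<h x})"
    using convex_linear_vimage[OF assms(1)] by simp
  ultimately have "convex hull S \<subseteq> h -` {..<h x}" by (rule hull_minimal)
  then show False using assms(2) by auto
qed

text \<open>Dirichlet's simultaneous approximation turns a real relation into a nearby integer one.\<close>
lemma real_relation_imp_int_relation:
  fixes v :: "'i::finite \<Rightarrow> int^'d" and c :: "'i \<Rightarrow> real"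
  assumes rel: "(\<Sum>k\<in>UNIV. c k *\<^sub>R embY (v k)) = 0" and c1: "c k0 = 1"
  obtains p :: "'i \<Rightarrow> int" where "(\<Sum>k\<in>UNIV. p k *s v k) = 0" and "p k0 \<noteq> 0"
proof -
  define n where "n = CARD('i)"
  obtain e where e: "bij_betw e {0..<n} (UNIV::'i set)"
    using ex_bij_betw_nat_finite[of "UNIV::'i set"] n_def by auto
  define M :: real where "M = (\<Sum>l\<in>UNIV. \<Sum>k\<in>UNIV. \<bar>of_int (v k $ l)\<bar>)"
  define N where "N = nat \<lceil>M\<rceil> + 2"
  have "0 \<le> M" unfolding M_def by (intro sum_nonneg) auto
  then have N: "M < real N" "2 \<le> real N" "0 < N" unfolding N_def by linarith+
  obtain q p0 where q: "0 < q"
    and approx: "\<And>t. t < n \<Longrightarrow> \<bar>of_int q * c (e t) - of_int (p0 t)\<bar> < 1 / real N"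
    using Dirichlet_approx_simult[OF N(3), of n "\<lambda>t. c (e t)"] by blast
  define p where "p k = p0 (inv_into {0..<n} e k)" for k
  have close: "\<bar>of_int q * c k - of_int (p k)\<bar> < 1 / real N" for k
  proof -
    have "k \<in> e ` {0..<n}" using e by (simp add: bij_betw_def)
    then show ?thesis
      using approx[of "inv_into {0..<n} e k"] inv_into_into[of k e "{0..<n}"]
      by (simp add: p_def f_inv_into_f)
  qed
  have "(\<Sum>k\<in>UNIV. p k *s v k) $ l = 0" for l
  proof -
    have c0: "(\<Sum>k\<in>UNIV. c k * of_int (v k $ l)) = 0"
      using arg_cong[OF rel, of "\<lambda>x. x $ l"] by (simp add: sum_component embY_def)
    have "real_of_int ((\<Sum>k\<in>UNIV. p k *s v k) $ l)
        = (\<Sum>k\<in>UNIV. (of_int (p k) - of_int q * c k) * of_int (v k $ l))"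
      using c0 by (simp add: sum_component algebra_simps sum_subtractf
          sum_distrib_left[symmetric] mult.assoc)
    also have "\<bar>\<dots>\<bar> \<le> (\<Sum>k\<in>UNIV. (1 / real N) * \<bar>of_int (v k $ l)\<bar>)"
    proof (rule order_trans[OF sum_abs sum_mono])
      fix k
      have "\<bar>of_int (p k) - of_int q * c k\<bar> \<le> 1 / real N" using close[of k] by linarith
      then show "\<bar>(of_int (p k) - of_int q * c k) * of_int (v k $ l)\<bar>
          \<le> (1 / real N) * \<bar>of_int (v k $ l)\<bar>"
        unfolding abs_mult by (rule mult_right_mono) auto
    qed
    also have "\<dots> \<le> (1 / real N) * M"
      unfolding sum_distrib_left[symmetric] M_def using N
      by (intro mult_left_mono member_le_sum) (auto intro: sum_nonneg)
    also have "\<dots> < 1" using N by (simp add: field_simps)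
    finally show ?thesis by linarith
  qed
  then have "(\<Sum>k\<in>UNIV. p k *s v k) = 0" by (simp add: vec_eq_iff)
  moreover have "p k0 \<noteq> 0"
  proof
    assume "p k0 = 0"
    then have "of_int q < 1 / real N" using close[of k0] c1 q by simp
    also have "\<dots> \<le> 1 / 2" using N by (simp add: field_simps)
    finally show False using q by linarith
  qed
  ultimately show thesis by (rule that)
qed

subsection \<open>Alternating words and rank-2 coordinates\<close>

primrec alternating :: "'i \<Rightarrow> 'i \<Rightarrow> nat \<Rightarrow> 'i list" where
  "alternating x y 0 = []"
| "alternating x y (Suc k) = alternating y x k @ [y]"

lemma length_alternating [simp]: "length (alternating x y k) = k"
  by (induction k arbitrary: x y) auto

lemma set_alternating: "set (alternating x y k) \<subseteq> {x, y}"
  by (induction k arbitrary: x y) auto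

lemma alternating_Suc_Cons: "alternating x y (Suc k) = (if even k then y else x) # alternating x y k"
  by (induction k arbitrary: x y) auto

lemma alternating_suffix: "m \<le> k \<Longrightarrow> \<exists>zs. alternating x y k = zs @ alternating x y m"
proof (induction m arbitrary: k x y)
  case (Suc m)
  then obtain zs where "alternating y x (k - 1) = zs @ alternating y x m" by fastforce
  moreover have "k = Suc (k - 1)" using Suc.prems by simp
  ultimately show ?case by (metis alternating.simps(2) append.assoc)
qed simp

lemma alternating_if_successively_neq:
  assumes "x \<noteq> y" "set xs \<subseteq> {x, y}" "successively (\<noteq>) xs" "xs = [] \<or> last xs = y"
  shows "xs = alternating x y (length xs)"
  using assms
proof (induction xs arbitrary: x y rule: rev_induct)
  case (snoc a xs)
  have a: "a = y" using snoc.prems by simp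
  have "xs = [] \<or> last xs = x"
  proof (cases "xs = []")
    case False
    then have "last xs \<noteq> a" using snoc.prems(3) by (simp add: successively_append_iff)
    moreover have "last xs \<in> {x, y}" using last_in_set[OF False] snoc.prems(2) by auto
    ultimately show ?thesis using a by auto
  qed simp
  then have "xs = alternating y x (length xs)"
    using snoc.IH[of y x] snoc.prems by (auto simp: successively_append_iff)
  then show ?case using a by simp
qed simp

lemma not_successively_neq_split:
  "\<not> successively (\<noteq>) xs \<Longrightarrow> \<exists>ys x zs. xs = ys @ x # x # zs"
proof (induction xs)
  case (Cons a xs)
  then obtain b xs' where xs: "xs = b # xs'" by (cases xs) auto
  show ?case
  proof (cases "a = b")
    case False
    then obtain ys x zs where "xs = ys @ x # x # zs" using Cons xs by auto
    then show ?thesis by (intro exI[of _ "a # ys"]) auto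
  qed (use xs in \<open>intro exI[of _ "[]"], auto\<close>)
qed simp

text \<open>With \<open>a = \<alpha>\<^sub>i(y)\<close>, \<open>b = \<alpha>\<^sub>j(y)\<close>, \<open>p = -a\<^sub>j\<^sub>,\<^sub>i\<close>, \<open>q = -a\<^sub>i\<^sub>,\<^sub>j\<close>, the reflections
  \<open>r\<^sub>i\<close> and \<open>r\<^sub>j\<close> act on \<open>y + s \<alpha>\<^sub>i\<^sup>\<or> + t \<alpha>\<^sub>j\<^sup>\<or>\<close> through these affine maps of \<open>(s, t)\<close>.\<close>
definition rank2_step :: "'i \<Rightarrow> 'i \<Rightarrow> real \<Rightarrow> real \<Rightarrow> real \<Rightarrow> real \<Rightarrow> 'i \<Rightarrow> real \<times> real \<Rightarrow> real \<times> real"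
  where "rank2_step i j p q a b x st =
    (if x = i then (- a - fst st + p * snd st, snd st) else (fst st, - b + q * fst st - snd st))"

lemma rank2_step_simps [simp]:
  "rank2_step i j p q a b i st = (- a - fst st + p * snd st, snd st)"
  "i \<noteq> j \<Longrightarrow> rank2_step i j p q a b j st = (fst st, - b + q * fst st - snd st)"
  unfolding rank2_step_def by simp_all

definition rank2_coords :: "'i \<Rightarrow> 'i \<Rightarrow> real \<Rightarrow> real \<Rightarrow> nat \<Rightarrow> real \<times> real"
  where "rank2_coords i j p q k = foldr (rank2_step i j p q 0 0) (alternating i j k) (1, 0)"

lemma rank2_coords_nonneg_infinite:
  fixes p q :: real
  assumes "i \<noteq> j" "0 \<le> p" "0 \<le> q" "4 \<le> p * q"
  shows "0 \<le> fst (rank2_coords i j p q k) \<and> 0 \<le> snd (rank2_coords i j p q k)"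
proof -
  have swap: "2 * t \<le> q * s" if "0 \<le> s" "0 \<le> t" "p * t \<le> 2 * s" for s t
  proof -
    have "4 * t \<le> (p * q) * t" using assms that by (intro mult_right_mono) auto
    moreover have "q * (p * t) \<le> q * (2 * s)" using assms that by (intro mult_left_mono) auto
    ultimately show ?thesis by (simp add: algebra_simps)
  qed
  have swap': "2 * s \<le> p * t" if "0 \<le> s" "0 \<le> t" "q * s \<le> 2 * t" for s t
  proof -
    have "4 * s \<le> (p * q) * s" using assms that by (intro mult_right_mono) auto
    moreover have "p * (q * s) \<le> p * (2 * t)" using assms that by (intro mult_left_mono) auto
    ultimately show ?thesis by (simp add: algebra_simps)
  qed
  \<comment> \<open>Invariant: the coordinate just changed dominates the other one in the ratio of the Cartan entries.\<close>
  have "0 \<le> fst (rank2_coords i j p q k) \<and> 0 \<le> snd (rank2_coords i j p q k) \<and>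
    (if even k then p * snd (rank2_coords i j p q k) \<le> 2 * fst (rank2_coords i j p q k)
     else q * fst (rank2_coords i j p q k) \<le> 2 * snd (rank2_coords i j p q k))"
  proof (induction k)
    case (Suc k)
    obtain s t where st: "rank2_coords i j p q k = (s, t)" by fastforce
    have IH: "0 \<le> s" "0 \<le> t" "if even k then p * t \<le> 2 * s else q * s \<le> 2 * t"
      using Suc st by auto
    have step: "rank2_coords i j p q (Suc k) = rank2_step i j p q 0 0 (if even k then j else i) (s, t)"
      using st by (simp add: rank2_coords_def alternating_Suc_Cons del: alternating.simps(2))
    show ?case
    proof (cases "even k")
      case True
      then show ?thesis using IH swap[of s t] assms unfolding step by (simp add: rank2_step_def)
    next
      case False
      then show ?thesis using IH swap'[of s t] assms unfolding step by (simp add: rank2_step_def)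
    qed
  qed (simp add: rank2_coords_def)
  then show ?thesis by blast
qed

lemma finite_type_cases:
  fixes P Q :: int
  assumes "0 \<le> P" "0 \<le> Q" "P = 0 \<longleftrightarrow> Q = 0" "P * Q < 4"
  shows "(P, Q) \<in> {(0, 0), (1, 1), (1, 2), (2, 1), (1, 3), (3, 1)}"
proof -
  have "\<not> (2 \<le> P \<and> 2 \<le> Q)"
  proof
    assume "2 \<le> P \<and> 2 \<le> Q"
    then have "2 * 2 \<le> P * Q" by (intro mult_mono) auto
    then show False using assms by simp
  qed
  then have "P \<le> 1 \<or> Q \<le> 1" by auto
  then show ?thesis
  proof
    assume "P \<le> 1"
    then have "P = 0 \<or> P = 1" using assms by auto
    then show ?thesis using assms by auto
  next
    assume "Q \<le> 1"
    then have "Q = 0 \<or> Q = 1" using assms by auto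
    then show ?thesis using assms by auto
  qed
qed

text \<open>The finite-type rank-2 Cartan matrices (types \<open>A\<^sub>1\<times>A\<^sub>1\<close>, \<open>A\<^sub>2\<close>, \<open>B\<^sub>2\<close>, \<open>G\<^sub>2\<close>): \<open>m\<close> is the
  braid length, and below it the coordinates stay nonnegative.\<close>
lemma rank2_finite_type:
  fixes P Q :: int
  assumes "i \<noteq> j" "0 \<le> P" "0 \<le> Q" "P = 0 \<longleftrightarrow> Q = 0" "P * Q < 4"
  obtains m where "0 < m"
    and "\<And>a b. foldr (rank2_step i j P Q a b) (alternating i j m) (0, 0)
              = foldr (rank2_step i j P Q a b) (alternating j i m) (0, 0)"
    and "\<And>k. k < m \<Longrightarrow> 0 \<le> fst (rank2_coords i j P Q k) \<and> 0 \<le> snd (rank2_coords i j P Q k)"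
proof -
  have "(P, Q) \<in> {(0, 0), (1, 1), (1, 2), (2, 1), (1, 3), (3, 1)}"
    using finite_type_cases[OF assms(2-)] .
  then consider "P = 0" "Q = 0" | "P = 1" "Q = 1" | "P = 1" "Q = 2" | "P = 2" "Q = 1"
    | "P = 1" "Q = 3" | "P = 3" "Q = 1" by auto
  then show thesis
    by cases (rule that[of "2"] that[of 3] that[of 4] that[of 4] that[of 6] that[of 6],
        use assms(1) in \<open>auto simp: rank2_step_def rank2_coords_def numeral_eq_Suc less_Suc_eq algebra_simps\<close>)+
qed

locale kac_moody =
  fixes A :: "'i::finite \<Rightarrow> 'i \<Rightarrow> int" and av al :: "'i \<Rightarrow> int^'d"
  assumes root_datum: "root_datum A av al"
begin

abbreviation coroot :: "'i \<Rightarrow> real^'d" where "coroot k \<equiv> embY (av k)"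
abbreviation r :: "'i \<Rightarrow> real^'d \<Rightarrow> real^'d" where "r \<equiv> reflA av al"
abbreviation act :: "'i list \<Rightarrow> real^'d \<Rightarrow> real^'d" where "act \<equiv> word_act av al"
abbreviation W :: "(real^'d \<Rightarrow> real^'d) set" where "W \<equiv> Wv av al"

lemma cartan_diag: "A i i = 2"
  and cartan_offdiag_nonpos: "i \<noteq> j \<Longrightarrow> A i j \<le> 0"
  and cartan_zero_sym: "A i j = 0 \<longleftrightarrow> A j i = 0"
  using root_datum unfolding root_datum_def gen_cartan_def by auto

lemma coroots_int_independent: "(\<Sum>i\<in>UNIV. c i *s av i) = 0 \<Longrightarrow> c i = 0"
  using root_datum unfolding root_datum_def by auto

lemma pairA_coroot: "pairA (al j) (coroot i) = of_int (A i j)"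
  using root_datum unfolding root_datum_def by (simp add: pairA_embY)

lemma r_apply: "r k x = x - pairA (al k) x *\<^sub>R coroot k"
  unfolding reflA_def ..

lemma r_r [simp]: "r k (r k x) = x"
  by (simp add: r_apply pairA_diff pairA_scaleR pairA_coroot cartan_diag algebra_simps)

lemma r_embY: "r k (embY y) = embY (reflY av al k y)"
  by (simp add: r_apply reflY_def embY_diff embY_scale pairA_embY)

lemma act_rev_act [simp]: "act (rev ws) (act ws x) = x"
  by (induction ws arbitrary: x) (auto simp: word_act_append)

lemma Wv_comp_act: "w \<in> W \<Longrightarrow> w \<circ> act us \<in> W"
  unfolding Wv_def by (auto simp: word_act_append[symmetric])

subsection \<open>Linear independence of the coroots and the height function\<close>

lemma coroots_independent_coeffs:
  assumes "(\<Sum>k\<in>UNIV. c k *\<^sub>R coroot k) = 0"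
  shows "c k = 0"
proof (rule ccontr)
  assume ck: "c k \<noteq> 0"
  have "(\<Sum>j\<in>UNIV. (c j / c k) *\<^sub>R coroot j) = (1 / c k) *\<^sub>R (\<Sum>j\<in>UNIV. c j *\<^sub>R coroot j)"
    by (simp add: scaleR_sum_right)
  also have "\<dots> = 0" using assms by simp
  finally obtain p where "(\<Sum>j\<in>UNIV. p j *s av j) = 0" "p k \<noteq> 0"
    using ck by (elim real_relation_imp_int_relation) simp
  then show False using coroots_int_independent by blast
qed

lemma inj_coroot: "inj coroot"
proof (rule injI, rule ccontr)
  fix x y assume xy: "coroot x = coroot y" and ne: "x \<noteq> y"
  define c where "c k = (if k = x then 1 else if k = y then -1 else (0::real))" for k
  have "(\<Sum>k\<in>UNIV. c k *\<^sub>R coroot k) = (\<Sum>k\<in>{x,y}. c k *\<^sub>R coroot k)"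
    by (rule sum.mono_neutral_right) (auto simp: c_def)
  also have "\<dots> = 0" using ne xy by (simp add: c_def)
  finally have "c x = 0" by (rule coroots_independent_coeffs)
  then show False by (simp add: c_def)
qed

lemma independent_coroots: "independent (range coroot)"
  unfolding independent_explicit_module
proof (intro allI impI)
  fix t u v assume t: "finite t" "t \<subseteq> range coroot" "(\<Sum>v\<in>t. u v *\<^sub>R v) = 0" "v \<in> t"
  define c where "c k = (if coroot k \<in> t then u (coroot k) else 0)" for k
  have "(\<Sum>k\<in>UNIV. c k *\<^sub>R coroot k) = (\<Sum>k\<in>coroot -` t. u (coroot k) *\<^sub>R coroot k)"
    by (rule sum.mono_neutral_cong_right) (auto simp: c_def)
  also have "\<dots> = (\<Sum>v\<in>coroot ` (coroot -` t). u v *\<^sub>R v)"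
    by (subst sum.reindex) (auto intro: inj_on_subset[OF inj_coroot])
  also have "coroot ` (coroot -` t) = t" using t(2) by auto
  finally have "(\<Sum>k\<in>UNIV. c k *\<^sub>R coroot k) = 0" using t(3) by simp
  moreover obtain k where "v = coroot k" using t by auto
  ultimately show "u v = 0" using coroots_independent_coeffs[of c k] t(4) by (simp add: c_def)
qed

definition height :: "real^'d \<Rightarrow> real" where
  "height = (SOME h. linear h \<and> (\<forall>k. h (coroot k) = 1))"

lemma linear_height: "linear height" and height_coroot [simp]: "height (coroot k) = 1"
proof -
  have "\<exists>h. linear h \<and> (\<forall>k. h (coroot k) = (1::real))"
    using linear_independent_extend[OF independent_coroots, of "\<lambda>_. 1"] by auto
  then have "linear height \<and> (\<forall>k. height (coroot k) = 1)"
    unfolding height_def by (rule someI_ex)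
  then show "linear height" "height (coroot k) = 1" by auto
qed

definition coroot_cone :: "(real^'d) set" where
  "coroot_cone = {x. \<exists>c. (\<forall>k. 0 \<le> c k) \<and> x = (\<Sum>k\<in>UNIV. c k *\<^sub>R coroot k)}"

lemma zero_in_coroot_cone: "0 \<in> coroot_cone"
  unfolding coroot_cone_def by (intro CollectI exI[of _ "\<lambda>_. 0"]) auto

lemma coroot_in_coroot_cone: "coroot i \<in> coroot_cone"
  unfolding coroot_cone_def
  by (intro CollectI exI[of _ "\<lambda>k. if k = i then 1 else 0"])
    (auto simp: if_distrib[of "\<lambda>c. c *\<^sub>R _"] cong: if_cong)

lemma coroot_cone_add: "x \<in> coroot_cone \<Longrightarrow> y \<in> coroot_cone \<Longrightarrow> x + y \<in> coroot_cone"
proof -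
  assume "x \<in> coroot_cone" "y \<in> coroot_cone"
  then obtain c d where "\<forall>k. 0 \<le> c k" "x = (\<Sum>k\<in>UNIV. c k *\<^sub>R coroot k)"
    "\<forall>k. 0 \<le> d k" "y = (\<Sum>k\<in>UNIV. d k *\<^sub>R coroot k)"
    unfolding coroot_cone_def by blast
  then show ?thesis unfolding coroot_cone_def
    by (intro CollectI exI[of _ "\<lambda>k. c k + d k"]) (auto simp: sum.distrib scaleR_add_left)
qed

lemma coroot_cone_scaleR: "x \<in> coroot_cone \<Longrightarrow> 0 \<le> a \<Longrightarrow> a *\<^sub>R x \<in> coroot_cone"
proof -
  assume "x \<in> coroot_cone" "0 \<le> a"
  then obtain c where "\<forall>k. 0 \<le> c k" "x = (\<Sum>k\<in>UNIV. c k *\<^sub>R coroot k)"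
    unfolding coroot_cone_def by blast
  then show ?thesis unfolding coroot_cone_def using \<open>0 \<le> a\<close>
    by (intro CollectI exI[of _ "\<lambda>k. a * c k"]) (auto simp: scaleR_sum_right)
qed

lemma coroot_cone_int_coeffs_nonneg:
  assumes "(\<Sum>k\<in>UNIV. of_int (n k) *\<^sub>R coroot k) \<in> coroot_cone"
  shows "0 \<le> n k"
proof -
  obtain c where c: "\<forall>k. 0 \<le> c k" "(\<Sum>k\<in>UNIV. of_int (n k) *\<^sub>R coroot k) = (\<Sum>k\<in>UNIV. c k *\<^sub>R coroot k)"
    using assms unfolding coroot_cone_def by blast
  then have "(\<Sum>k\<in>UNIV. (c k - of_int (n k)) *\<^sub>R coroot k) = 0"
    by (simp add: scaleR_diff_left sum_subtractf)
  then have "c k - of_int (n k) = 0" by (rule coroots_independent_coeffs)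
  then show ?thesis using c(1) by (metis of_int_0_le_iff eq_iff_diff_eq_0)
qed

definition wlen :: "(real^'d \<Rightarrow> real^'d) \<Rightarrow> nat" where
  "wlen f = (LEAST n. \<exists>ws. length ws = n \<and> act ws = f)"

lemma wlen_le: "act ws = f \<Longrightarrow> wlen f \<le> length ws"
  unfolding wlen_def by (rule Least_le) auto

lemma obtain_reduced_word:
  assumes "f \<in> W"
  obtains ws where "act ws = f" "length ws = wlen f"
proof -
  have "\<exists>n ws. length ws = n \<and> act ws = f" using assms unfolding Wv_def by auto
  then have "\<exists>ws. length ws = wlen f \<and> act ws = f" unfolding wlen_def by (rule LeastI_ex)
  then show thesis using that by blast
qed

lemma wlen_comp_le:
  assumes "f \<in> W"
  shows "wlen (f \<circ> act us) \<le> wlen f + length us"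
proof -
  obtain vs where "act vs = f" "length vs = wlen f" using assms by (rule obtain_reduced_word)
  then show ?thesis using wlen_le[of "vs @ us"] by (simp add: word_act_append)
qed

lemma act_comp_Wv: "w \<in> W \<Longrightarrow> act vs \<circ> w \<in> W"
  unfolding Wv_def by (auto simp: word_act_append[symmetric])

subsection \<open>Rank-2 subgroups of the Weyl group\<close>

lemma act_rank2:
  assumes "i \<noteq> j" "set ws \<subseteq> {i, j}"
  shows "act ws (y + s *\<^sub>R coroot i + t *\<^sub>R coroot j) =
    (let st = foldr (rank2_step i j (of_int (- A j i)) (of_int (- A i j)) (pairA (al i) y) (pairA (al j) y)) ws (s, t)
     in y + fst st *\<^sub>R coroot i + snd st *\<^sub>R coroot j)"
  using assms(2)
proof (induction ws)
  case (Cons x ws)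
  let ?step = "rank2_step i j (of_int (- A j i)) (of_int (- A i j)) (pairA (al i) y) (pairA (al j) y)"
  obtain s' t' where st: "foldr ?step ws (s, t) = (s', t')" by fastforce
  have IH: "act ws (y + s *\<^sub>R coroot i + t *\<^sub>R coroot j) = y + s' *\<^sub>R coroot i + t' *\<^sub>R coroot j"
    using Cons st by (simp add: Let_def)
  have r_step: "r k (y + s' *\<^sub>R coroot i + t' *\<^sub>R coroot j) = y + s' *\<^sub>R coroot i + t' *\<^sub>R coroot j
      - (pairA (al k) y + s' * A i k + t' * A j k) *\<^sub>R coroot k" for k
    by (simp add: r_apply pairA_add pairA_scaleR pairA_coroot)
  have "x = i \<or> x = j" using Cons.prems by auto
  then show ?case
  proof
    assume x: "x = i"
    have "act (x # ws) (y + s *\<^sub>R coroot i + t *\<^sub>R coroot j)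
        = y + (s' - (pairA (al i) y + s' * A i i + t' * A j i)) *\<^sub>R coroot i + t' *\<^sub>R coroot j"
      using IH x by (simp add: r_step scaleR_diff_left)
    also have "s' - (pairA (al i) y + s' * A i i + t' * A j i) = - pairA (al i) y - s' - A j i * t'"
      by (simp add: cartan_diag)
    finally show ?thesis using x st by (simp add: Let_def)
  next
    assume x: "x = j"
    have "act (x # ws) (y + s *\<^sub>R coroot i + t *\<^sub>R coroot j)
        = y + s' *\<^sub>R coroot i + (t' - (pairA (al j) y + s' * A i j + t' * A j j)) *\<^sub>R coroot j"
      using IH x by (simp add: r_step scaleR_diff_left)
    also have "t' - (pairA (al j) y + s' * A i j + t' * A j j) = - pairA (al j) y - A i j * s' - t'"
      by (simp add: cartan_diag)
    finally show ?thesis using x st assms(1) by (simp add: Let_def)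
  qed
qed simp

lemma act_alternating_coroot:
  assumes "i \<noteq> j"
  shows "act (alternating i j k) (coroot i) =
    fst (rank2_coords i j (of_int (- A j i)) (of_int (- A i j)) k) *\<^sub>R coroot i
    + snd (rank2_coords i j (of_int (- A j i)) (of_int (- A i j)) k) *\<^sub>R coroot j"
  using act_rank2[OF assms set_alternating, where y=0 and s=1 and t=0] by (simp add: Let_def rank2_coords_def)

lemma act_braid:
  assumes "i \<noteq> j"
    and braid: "\<And>a b. foldr (rank2_step i j (of_int (- A j i)) (of_int (- A i j)) a b) (alternating i j m) (0, 0)
                    = foldr (rank2_step i j (of_int (- A j i)) (of_int (- A i j)) a b) (alternating j i m) (0, 0)"
  shows "act (alternating i j m) = act (alternating j i m)"
proof
  fix y
  have "set (alternating j i m) \<subseteq> {i, j}" using set_alternating by fast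
  then show "act (alternating i j m) y = act (alternating j i m) y"
    using act_rank2[OF assms(1) set_alternating, where y=y and s=0 and t=0]
      act_rank2[OF assms(1), where y=y and s=0 and t=0] braid
    by (simp add: Let_def)
qed

lemma braid_shortens:
  assumes braid: "act (alternating i j m) = act (alternating j i m)" and "0 < m" "m \<le> k"
  obtains us where "set us \<subseteq> {i, j}" "act us = act (alternating i j k) \<circ> r i" "length us < k"
proof -
  from alternating_suffix[OF assms(3), of i j]
  obtain zs where zs: "alternating i j k = zs @ alternating i j m" ..
  obtain m' where "m = Suc m'" using \<open>0 < m\<close> gr0_implies_Suc by blast
  then obtain bs where bs: "alternating j i m = bs @ [i]" by simp
  have "set (zs @ bs) \<subseteq> {i, j}"
    using set_alternating[of i j k] set_alternating[of j i m] unfolding zs bs by auto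
  moreover have "act (zs @ bs) = act (alternating i j k) \<circ> r i"
  proof -
    have "act (alternating i j k) = act (zs @ bs) \<circ> r i"
      unfolding zs word_act_append braid bs by (simp add: o_assoc)
    then show ?thesis by (simp add: fun_eq_iff)
  qed
  moreover have "length (zs @ bs) < k"
    using arg_cong[OF zs, of length] arg_cong[OF bs, of length] by simp
  ultimately show thesis by (rule that)
qed

lemma alternating_rank2_coords_nonneg:
  assumes ij: "i \<noteq> j"
    and up: "\<And>us. set us \<subseteq> {i, j} \<Longrightarrow> act us = act (alternating i j k) \<circ> r i \<Longrightarrow> k \<le> length us"
  shows "0 \<le> fst (rank2_coords i j (of_int (- A j i)) (of_int (- A i j)) k)
       \<and> 0 \<le> snd (rank2_coords i j (of_int (- A j i)) (of_int (- A i j)) k)"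
proof -
  define P where "P = - A j i"
  define Q where "Q = - A i j"
  have PQ: "0 \<le> P" "0 \<le> Q" "P = 0 \<longleftrightarrow> Q = 0"
    unfolding P_def Q_def using cartan_offdiag_nonpos ij cartan_zero_sym by (auto simp: le_minus_iff)
  show ?thesis
  proof (cases "4 \<le> P * Q")
    case True
    then have "4 \<le> real_of_int P * real_of_int Q" by (metis of_int_le_iff of_int_mult of_int_numeral)
    then show ?thesis using rank2_coords_nonneg_infinite[OF ij] PQ unfolding P_def Q_def by simp
  next
    case False
    then have "P * Q < 4" by simp
    then obtain m where "0 < m"
      and braid: "\<And>a b. foldr (rank2_step i j P Q a b) (alternating i j m) (0, 0)
                        = foldr (rank2_step i j P Q a b) (alternating j i m) (0, 0)"
      and pos: "\<And>k. k < m \<Longrightarrow> 0 \<le> fst (rank2_coords i j P Q k) \<and> 0 \<le> snd (rank2_coords i j P Q k)"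
      using rank2_finite_type[OF ij PQ] by blast
    have "k < m"
    proof (rule ccontr)
      assume "\<not> k < m"
      then have "m \<le> k" by simp
      have "act (alternating i j m) = act (alternating j i m)"
        by (rule act_braid[OF ij]) (use braid in \<open>simp add: P_def Q_def\<close>)
      then obtain us where "set us \<subseteq> {i, j}" "act us = act (alternating i j k) \<circ> r i" "length us < k"
        using \<open>0 < m\<close> \<open>m \<le> k\<close> by (rule braid_shortens)
      then show False using up by fastforce
    qed
    then show ?thesis using pos unfolding P_def Q_def by blast
  qed
qed

lemma dihedral_minimal_word_alternating:
  assumes ij: "i \<noteq> j" and us: "set us \<subseteq> {i, j}"
    and min: "\<And>us'. set us' \<subseteq> {i, j} \<Longrightarrow> act us' = act us \<Longrightarrow> length us \<le> length us'"
    and up: "\<And>us'. set us' \<subseteq> {i, j} \<Longrightarrow> act us' = act us \<circ> r i \<Longrightarrow> length us \<le> length us'"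
  shows "us = alternating i j (length us)"
proof (rule alternating_if_successively_neq[OF ij us])
  show "successively (\<noteq>) us"
  proof (rule ccontr)
    assume "\<not> successively (\<noteq>) us"
    then obtain ys x zs where u: "us = ys @ x # x # zs" using not_successively_neq_split by blast
    have "set (ys @ zs) \<subseteq> {i, j}" using us unfolding u by auto
    moreover have "act (ys @ zs) = act us" unfolding u by (simp add: word_act_append fun_eq_iff)
    ultimately have "length us \<le> length (ys @ zs)" by (rule min)
    then show False unfolding u by simp
  qed
  show "us = [] \<or> last us = j"
  proof (rule ccontr)
    assume "\<not> (us = [] \<or> last us = j)"
    then have ne: "us \<noteq> []" and "last us \<noteq> j" by auto
    moreover have "last us \<in> {i, j}" using us last_in_set[OF ne] by blast
    ultimately have "last us = i" by blast
    then have u: "us = butlast us @ [i]" using append_butlast_last_id[OF ne] by simp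
    have "set (butlast us) \<subseteq> {i, j}" using us in_set_butlastD by fastforce
    moreover have "act (butlast us) = act us \<circ> r i"
      by (subst u) (simp add: word_act_append fun_eq_iff)
    ultimately have "length us \<le> length (butlast us)" by (rule up)
    moreover have "length (butlast us) < length us" using ne by simp
    ultimately show False by linarith
  qed
qed

subsection \<open>Positivity of \<open>w(\<alpha>\<^sub>i\<^sup>\<or>)\<close> and dominance\<close>

lemma dihedral_act_coroot_nonneg:
  assumes ij: "i \<noteq> j" and us: "set us \<subseteq> {i, j}"
    and min: "\<And>us'. set us' \<subseteq> {i, j} \<Longrightarrow> act us' = act us \<Longrightarrow> length us \<le> length us'"
    and up: "\<And>us'. set us' \<subseteq> {i, j} \<Longrightarrow> act us' = act us \<circ> r i \<Longrightarrow> length us \<le> length us'"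
  obtains a b where "0 \<le> a" "0 \<le> b" "act us (coroot i) = a *\<^sub>R coroot i + b *\<^sub>R coroot j"
proof -
  define k where "k = length us"
  have alt: "us = alternating i j k"
    unfolding k_def by (rule dihedral_minimal_word_alternating[OF ij us min up])
  have "0 \<le> fst (rank2_coords i j (of_int (- A j i)) (of_int (- A i j)) k)
      \<and> 0 \<le> snd (rank2_coords i j (of_int (- A j i)) (of_int (- A i j)) k)"
  proof (rule alternating_rank2_coords_nonneg[OF ij])
    fix us' assume "set us' \<subseteq> {i, j}" "act us' = act (alternating i j k) \<circ> r i"
    then have "length us \<le> length us'" using up alt by simp
    then show "k \<le> length us'" unfolding k_def .
  qed
  then show thesis
    using that act_alternating_coroot[OF ij, of k] alt by auto
qed

text \<open>A shortest factorisation \<open>w = v \<cdot> u\<close> with \<open>u\<close> in the rank-2 subgroup \<open>\<langle>r\<^sub>i, r\<^sub>j\<rangle>\<close>: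
  minimality of \<open>\<ell>(v)\<close> makes \<open>v\<close> increase under both \<open>r\<^sub>i\<close> and \<open>r\<^sub>j\<close>.\<close>
lemma dihedral_factorization:
  assumes w: "w \<in> W" and j: "wlen (w \<circ> r j) < wlen w"
  obtains v us where "v \<in> W" "set us \<subseteq> {i, j}" "v \<circ> act us = w" "wlen v + length us = wlen w"
    "wlen v < wlen w" "\<forall>x\<in>{i, j}. wlen v \<le> wlen (v \<circ> r x)"
proof -
  define C where "C = {wlen v | v us. v \<in> W \<and> set us \<subseteq> {i, j} \<and> v \<circ> act us = w \<and> wlen v + length us = wlen w}"
  have wj: "(w \<circ> r j) \<circ> act [j] = w" by (simp add: fun_eq_iff)
  have wjW: "w \<circ> r j \<in> W" using Wv_comp_act[OF w, of "[j]"] by simp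
  have "wlen w \<le> wlen (w \<circ> r j) + 1"
    using wlen_comp_le[OF wjW, of "[j]"] wj by simp
  then have "wlen (w \<circ> r j) \<in> C"
    unfolding C_def using j wj wjW by (intro CollectI exI[of _ "w \<circ> r j"] exI[of _ "[j]"]) simp
  define l where "l = (LEAST l. l \<in> C)"
  have "l \<in> C" unfolding l_def by (rule LeastI) fact
  then obtain v us where v: "v \<in> W" "set us \<subseteq> {i, j}" "v \<circ> act us = w" "wlen v + length us = wlen w"
    and l: "l = wlen v" unfolding C_def by blast
  have "l \<le> wlen (w \<circ> r j)" unfolding l_def by (rule Least_le) fact
  then have "wlen v < wlen w" using j l by simp
  moreover have "wlen v \<le> wlen (v \<circ> r x)" if x: "x \<in> {i, j}" for x
  proof (rule ccontr)
    assume lt: "\<not> wlen v \<le> wlen (v \<circ> r x)"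
    have vx: "v \<circ> r x \<in> W" using Wv_comp_act[OF v(1), of "[x]"] by simp
    have eq: "(v \<circ> r x) \<circ> act (x # us) = w" using v(3) by (simp add: fun_eq_iff)
    have "wlen w \<le> wlen (v \<circ> r x) + length (x # us)"
      using wlen_comp_le[OF vx, of "x # us"] eq by simp
    then have "wlen (v \<circ> r x) + length (x # us) = wlen w" using v(4) lt by simp
    moreover have "set (x # us) \<subseteq> {i, j}" using v(2) x by simp
    ultimately have "wlen (v \<circ> r x) \<in> C"
      unfolding C_def using vx eq by (intro CollectI exI[of _ "v \<circ> r x"] exI[of _ "x # us"]) simp
    moreover have "wlen (v \<circ> r x) < l" using l lt by simp
    ultimately show False unfolding l_def using not_less_Least by blast
  qed
  ultimately show thesis using that v by blast
qed

theorem act_coroot_in_coroot_cone: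
  assumes "w \<in> W" "wlen w \<le> wlen (w \<circ> r i)"
  shows "w (coroot i) \<in> coroot_cone"
  using assms
proof (induction "wlen w" arbitrary: w i rule: less_induct)
  case less
  obtain ws where ws: "act ws = w" "length ws = wlen w" using less.prems(1) by (rule obtain_reduced_word)
  show ?case
  proof (cases "ws = []")
    case True
    then show ?thesis using ws coroot_in_coroot_cone by auto
  next
    case False
    then obtain ws' j where ws': "ws = ws' @ [j]" by (metis append_butlast_last_id)
    have "w = act ws' \<circ> r j" using ws(1) unfolding ws' by (simp add: word_act_append)
    then have "w \<circ> r j = act ws'" by (simp add: fun_eq_iff)
    then have jlt: "wlen (w \<circ> r j) < wlen w" using wlen_le[of ws'] ws(2) ws' by simp
    then have ij: "i \<noteq> j" using less.prems(2) by auto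
    obtain v us where v: "v \<in> W" "set us \<subseteq> {i, j}" "v \<circ> act us = w"
      "wlen v + length us = wlen w" "wlen v < wlen w" and up: "\<forall>x\<in>{i, j}. wlen v \<le> wlen (v \<circ> r x)"
      by (rule dihedral_factorization[OF less.prems(1) jlt])
    have vi: "v (coroot i) \<in> coroot_cone" and vj: "v (coroot j) \<in> coroot_cone"
      using up by (auto intro: less.hyps[OF v(5) v(1)])
    obtain a b where ab: "0 \<le> a" "0 \<le> b" "act us (coroot i) = a *\<^sub>R coroot i + b *\<^sub>R coroot j"
    proof (rule dihedral_act_coroot_nonneg[OF ij v(2)])
      fix us' assume "set us' \<subseteq> {i, j}"
      show "act us' = act us \<Longrightarrow> length us \<le> length us'"
        using wlen_comp_le[OF v(1), of us'] v(3,4) by auto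
      show "act us' = act us \<circ> r i \<Longrightarrow> length us \<le> length us'"
        using wlen_comp_le[OF v(1), of us'] v(3,4) less.prems(2) by (auto simp: o_assoc)
    qed
    have "w (coroot i) = a *\<^sub>R v (coroot i) + b *\<^sub>R v (coroot j)"
      using v(3) ab(3) linear_Wv[OF v(1)] by (auto simp: linear_add linear_scale)
    then show ?thesis using vi vj ab by (simp add: coroot_cone_add coroot_cone_scaleR)
  qed
qed

lemma dominant_minus_act_in_coroot_cone:
  assumes dom: "\<And>k. 0 \<le> pairA (al k) x" and w: "w \<in> W"
  shows "x - w x \<in> coroot_cone"
proof -
  have "x - act ws x \<in> coroot_cone" if "length ws = wlen (act ws)" for ws
    using that
  proof (induction ws rule: rev_induct)
    case (snoc j ws)
    have "wlen (act (ws @ [j])) \<le> wlen (act ws) + 1"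
      using wlen_comp_le[of "act ws" "[j]"] by (simp add: word_act_append)
    moreover have "wlen (act ws) \<le> length ws" by (rule wlen_le) simp
    ultimately have red: "length ws = wlen (act ws)" using snoc.prems by simp
    have "act ws \<circ> r j = act (ws @ [j])" by (simp add: word_act_append)
    then have "wlen (act ws) \<le> wlen (act ws \<circ> r j)" using snoc.prems red by simp
    then have cone_j: "act ws (coroot j) \<in> coroot_cone" by (intro act_coroot_in_coroot_cone) auto
    have "x - act (ws @ [j]) x = (x - act ws x) + pairA (al j) x *\<^sub>R act ws (coroot j)"
      using linear_word_act[of av al ws] by (simp add: word_act_append r_apply linear_diff linear_scale)
    then show ?case by (simp only:) (intro coroot_cone_add coroot_cone_scaleR snoc.IH red dom cone_j)
  qed (simp add: zero_in_coroot_cone)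
  moreover obtain ws where "act ws = w" "length ws = wlen w" using w by (rule obtain_reduced_word)
  ultimately show ?thesis by blast
qed

lemma minus_iterated_reflY_in_Qvee: "y - foldr (reflY av al) ws y \<in> Qvee av"
  unfolding Qvee_def
proof (induction ws)
  case Nil
  show ?case by (intro CollectI exI[of _ "\<lambda>_. 0"]) simp
next
  case (Cons i ws)
  then obtain n where n: "y - foldr (reflY av al) ws y = (\<Sum>k\<in>UNIV. n k *s av k)" by blast
  define m where "m = pairY (al i) (foldr (reflY av al) ws y)"
  have delta: "(\<Sum>k\<in>UNIV. (if k = i then m else 0) *s av k) = m *s av i"
    by (simp add: if_distrib[of "\<lambda>c. c *s _"] cong: if_cong)
  have "y - foldr (reflY av al) (i # ws) y = (y - foldr (reflY av al) ws y) + m *s av i"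
    by (simp add: reflY_def m_def)
  also have "\<dots> = (\<Sum>k\<in>UNIV. (n k + (if k = i then m else 0)) *s av k)"
    unfolding n delta[symmetric] vector_sadd_rdistrib sum.distrib ..
  finally show ?case by (intro CollectI exI[of _ "\<lambda>k. n k + (if k = i then m else 0)"]) simp
qed

lemma embY_minus_act_in_coroot_lattice:
  obtains n :: "'i \<Rightarrow> int" where "embY y - act ws (embY y) = (\<Sum>k\<in>UNIV. of_int (n k) *\<^sub>R coroot k)"
proof -
  have "act ws (embY y) = embY (foldr (reflY av al) ws y)"
    by (induction ws) (simp_all add: r_embY)
  moreover obtain n where "y - foldr (reflY av al) ws y = (\<Sum>k\<in>UNIV. n k *s av k)"
    using minus_iterated_reflY_in_Qvee unfolding Qvee_def by blast
  ultimately have "embY y - act ws (embY y) = (\<Sum>k\<in>UNIV. of_int (n k) *\<^sub>R coroot k)"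
    by (simp add: embY_diff[symmetric] embY_sum embY_scale)
  then show thesis by (rule that)
qed

lemma dominant_minus_orbit_nonneg_coeffs:
  assumes "\<And>k. 0 \<le> pairA (al k) (embY lam)" and "w \<in> W"
  obtains n :: "'i \<Rightarrow> int" where "\<forall>k. 0 \<le> n k"
    and "embY lam - w (embY lam) = (\<Sum>k\<in>UNIV. of_int (n k) *\<^sub>R coroot k)"
proof -
  obtain ws where ws: "act ws = w" using \<open>w \<in> W\<close> unfolding Wv_def by blast
  obtain n where n: "embY lam - act ws (embY lam) = (\<Sum>k\<in>UNIV. of_int (n k) *\<^sub>R coroot k)"
    by (rule embY_minus_act_in_coroot_lattice)
  note n = n[unfolded ws]
  have "(\<Sum>k\<in>UNIV. of_int (n k) *\<^sub>R coroot k) \<in> coroot_cone"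
    using dominant_minus_act_in_coroot_cone[OF assms] unfolding n .
  then show thesis using that n coroot_cone_int_coeffs_nonneg by blast
qed

subsection \<open>The sets \<open>R\<^sub>w(\<mu>)\<close>\<close>

definition short_images :: "int^'d \<Rightarrow> nat \<Rightarrow> (real^'d) set" where
  "short_images mu L = {act vs (embY mu) | vs. length vs \<le> L}"

lemma short_images_mono: "L \<le> L' \<Longrightarrow> short_images mu L \<subseteq> short_images mu L'"
  unfolding short_images_def by auto

lemma r_short_images: "r i ` short_images mu L \<subseteq> short_images mu (Suc L)"
proof
  fix z assume "z \<in> r i ` short_images mu L"
  then obtain vs where "length vs \<le> L" "z = r i (act vs (embY mu))"
    unfolding short_images_def by blast
  then show "z \<in> short_images mu (Suc L)"
    unfolding short_images_def by (intro CollectI exI[of _ "i # vs"]) simp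
qed

lemma iterated_Ri_in_convex_hull:
  "y \<in> foldr (Ri av al) ws {mu} \<Longrightarrow> embY y \<in> convex hull (short_images mu (length ws))"
proof (induction ws arbitrary: y)
  case Nil
  then have "embY y \<in> short_images mu 0"
    unfolding short_images_def by (intro CollectI exI[of _ "[]"]) simp
  then show ?case by (simp add: hull_inc)
next
  case (Cons i ws)
  define F where "F = foldr (Ri av al) ws {mu}"
  let ?H = "convex hull (short_images mu (Suc (length ws)))"
  have IH: "embY ` F \<subseteq> convex hull (short_images mu (length ws))"
    by (rule image_subsetI) (use Cons.IH in \<open>simp add: F_def\<close>)
  have "convex hull (short_images mu (length ws)) \<subseteq> ?H"
    by (rule hull_mono[OF short_images_mono]) simp
  with IH have "embY ` F \<subseteq> ?H" by (rule order_trans)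
  moreover have "embY ` reflY av al i ` F \<subseteq> ?H"
  proof -
    have "embY ` reflY av al i ` F = r i ` embY ` F" by (simp add: image_image r_embY)
    also have "\<dots> \<subseteq> r i ` (convex hull (short_images mu (length ws)))" using IH by (rule image_mono)
    also have "\<dots> = convex hull (r i ` short_images mu (length ws))"
      by (rule convex_hull_linear_image[OF linear_reflA])
    also have "\<dots> \<subseteq> ?H" by (rule hull_mono[OF r_short_images])
    finally show ?thesis .
  qed
  ultimately have "convex hull (embY ` (F \<union> reflY av al i ` F)) \<subseteq> ?H"
    by (simp add: image_Un convex_hull_subset)
  moreover have "embY y \<in> convex hull (embY ` (F \<union> reflY av al i ` F))"
    using Cons.prems unfolding Ri_def F_def by simp
  ultimately show ?case by auto
qed

lemma Rw_height_bound:
  assumes "nu \<in> Rw av al (act us) mu"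
  obtains vs where "length vs \<le> length us" "height (embY nu) \<le> height (act vs (embY mu))"
proof -
  obtain ws where red: "reduced_expr av al (act us) ws" and nu: "nu \<in> foldr (Ri av al) ws {mu}"
    using assms unfolding Rw_def by blast
  have "length ws \<le> length us" using red unfolding reduced_expr_def by blast
  then have "embY nu \<in> convex hull (short_images mu (length us))"
    using iterated_Ri_in_convex_hull[OF nu] hull_mono[OF short_images_mono] by blast
  then obtain g where "g \<in> short_images mu (length us)" "height (embY nu) \<le> height g"
    using convex_hull_linear_le_point[OF linear_height] by blast
  then show thesis using that unfolding short_images_def by blast
qed

lemma Rw_preimage_form:
  assumes dom: "\<And>k. 0 \<le> pairA (al k) (embY lam)"
    and mu: "mu \<in> Worbit av al lam" and nu: "nu \<in> Rw av al (act us) mu"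
  obtains vs n where "length vs \<le> length us"
    and "\<forall>k. 0 \<le> n k \<and> n k \<le> \<lceil>height (embY lam) - height (embY nu)\<rceil>"
    and "embY mu = act (rev vs) (embY lam - (\<Sum>k\<in>UNIV. of_int (n k) *\<^sub>R coroot k))"
proof -
  obtain w where w: "w \<in> W" "embY mu = w (embY lam)" using mu unfolding Worbit_def by blast
  obtain vs where vs: "length vs \<le> length us" "height (embY nu) \<le> height (act vs (embY mu))"
    using nu by (rule Rw_height_bound)
  obtain n where n0: "\<forall>k. 0 \<le> n k"
    and n: "embY lam - (act vs \<circ> w) (embY lam) = (\<Sum>k\<in>UNIV. of_int (n k) *\<^sub>R coroot k)"
    by (rule dominant_minus_orbit_nonneg_coeffs[OF dom act_comp_Wv[OF w(1), of vs]])
  have "(\<Sum>k\<in>UNIV. real_of_int (n k)) = height (embY lam - (act vs \<circ> w) (embY lam))"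
    unfolding n by (simp add: linear_sum[OF linear_height] linear_scale[OF linear_height])
  also have "\<dots> = height (embY lam) - height (act vs (embY mu))"
    using w(2) by (simp add: linear_diff[OF linear_height])
  also have "\<dots> \<le> height (embY lam) - height (embY nu)" using vs(2) by simp
  finally have sum_le: "(\<Sum>k\<in>UNIV. real_of_int (n k)) \<le> height (embY lam) - height (embY nu)" .
  have "n k \<le> \<lceil>height (embY lam) - height (embY nu)\<rceil>" for k
  proof -
    have "real_of_int (n k) \<le> (\<Sum>k\<in>UNIV. real_of_int (n k))"
      by (rule member_le_sum) (simp_all add: n0)
    also have "\<dots> \<le> of_int \<lceil>height (embY lam) - height (embY nu)\<rceil>"
      using sum_le le_of_int_ceiling by (rule order_trans)
    finally show ?thesis by simp
  qed
  moreover have "act vs (embY mu) = embY lam - (embY lam - (act vs \<circ> w) (embY lam))"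
    using w(2) by simp
  then have "act vs (embY mu) = embY lam - (\<Sum>k\<in>UNIV. of_int (n k) *\<^sub>R coroot k)"
    unfolding n .
  then have "embY mu = act (rev vs) (embY lam - (\<Sum>k\<in>UNIV. of_int (n k) *\<^sub>R coroot k))"
    by (metis act_rev_act)
  ultimately show thesis using n0 by (intro that[OF vs(1)]) auto
qed

lemma finite_Rw_preimages:
  assumes dom: "\<And>k. 0 \<le> pairA (al k) (embY lam)" and u: "u \<in> W"
  shows "finite {mu \<in> Worbit av al lam. nu \<in> Rw av al u mu}"
proof -
  obtain us where us: "act us = u" using u unfolding Wv_def by blast
  define N where "N = \<lceil>height (embY lam) - height (embY nu)\<rceil>"
  define Ns where "Ns = {n :: 'i \<Rightarrow> int. \<forall>k. 0 \<le> n k \<and> n k \<le> N}"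
  define F where "F = (\<lambda>(vs, n). act (rev vs) (embY lam - (\<Sum>k\<in>UNIV. of_int (n k) *\<^sub>R coroot k)))
    ` ({vs. length vs \<le> length us} \<times> Ns)"
  have "Ns = Pi\<^sub>E UNIV (\<lambda>_. {0..N})" unfolding Ns_def PiE_def Pi_def extensional_def by auto
  then have "finite Ns" by (simp add: finite_PiE)
  moreover have "finite {vs :: 'i list. length vs \<le> length us}"
    using finite_lists_length_le[of "UNIV :: 'i set" "length us"] by simp
  ultimately have "finite F" unfolding F_def by (intro finite_imageI finite_cartesian_product)
  then have "finite (embY -` F)" using inj_embY by (rule finite_vimageI)
  moreover have "embY mu \<in> F" if mu: "mu \<in> Worbit av al lam" and nu: "nu \<in> Rw av al u mu" for mu
  proof -
    obtain vs n where vs: "length vs \<le> length us" and n: "\<forall>k. 0 \<le> n k \<and> n k \<le> N"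
      and eq: "embY mu = act (rev vs) (embY lam - (\<Sum>k\<in>UNIV. of_int (n k) *\<^sub>R coroot k))"
      unfolding N_def using dom mu nu[folded us] by (rule Rw_preimage_form)
    have "n \<in> Ns" unfolding Ns_def using n by simp
    then show ?thesis unfolding F_def eq using vs by (intro image_eqI[where x="(vs, n)"]) auto
  qed
  then have "{mu \<in> Worbit av al lam. nu \<in> Rw av al u mu} \<subseteq> embY -` F" by blast
  ultimately show ?thesis by (rule finite_subset[rotated])
qed

end

theorem mainTheorem10:
  fixes A :: "'i::finite \<Rightarrow> 'i \<Rightarrow> int"
    and alphav alpha :: "'i \<Rightarrow> int^'d"
    and lam nu :: "int^'d"
    and u :: "real^'d \<Rightarrow> real^'d"
  assumes "root_datum A alphav alpha"
    and "lam \<in> Yplusplus alpha"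
    and "nu \<in> Yplus alphav alpha"
    and "u \<in> Wv alphav alpha"
  shows "finite {mu \<in> Worbit alphav alpha lam. nu \<in> Rw alphav alpha u mu}"
proof -
  interpret kac_moody A alphav alpha by (rule kac_moody.intro) fact
  show ?thesis
  proof (rule finite_Rw_preimages)
    show "0 \<le> pairA (alpha k) (embY lam)" for k
      using assms(2) unfolding Yplusplus_def by (auto intro: pairA_nonneg_on_closure_Cvf)
  qed fact
qed

end
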